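(* Let $d\ge1$ and let $\mathcal{Q}=\{Q_1,\dots,Q_{d+1}\}$ be closed cubes in $\mathbb{R}^d$. For points $x^j=(x^j_1,\dots,x^j_d)\in Q_j$, $1\le j\le d+1$, let $\mathbf{L}(x)=(L_1,\dots,L_{2d})$ where $L_\ell:\mathbb{R}^{d+1}\to\mathbb{R}$, $L_\ell(v)=v_\ell+2x^1_\ell v_{d+1}$ for $1\le\ell\le d$, and $L_{d+\ell}:\mathbb{R}^{d+1}\to\mathbb{R}^d$, $L_{d+\ell}(v)=(v_1+2x^{\ell+1}_1v_{d+1},\dots,v_d+2x^{\ell+1}_dv_{d+1})$ for $1\le\ell\le d$; let $\mathbf{p}=(\frac1d,\dots,\frac1d)\in\mathbb{R}^{2d}$. (i) If $\mathcal{Q}$ is weakly transversal with pivot $Q_1$, then $\mathrm{BL}(\mathbf{L}(x),\mathbf{p})<\infty$ for every choice of points $x^j\in Q_j$. (ii) Conversely, if $\mathrm{BL}(\mathbf{L}(x),\mathbf{p})<\infty$ for every choice of points $x^j\in Q_j$, then each $Q_l$ can be partitioned into finitely many sub-cubes $Q_l=\bigcup_iQ_{l,i}$ such that every collection $\{\widetilde Q_1,\dots,\widetilde Q_{d+1}\}$ with $\widetilde Q_l\in\{Q_{l,i}\}_i$ is weakly transversal with pivot $\widetilde Q_1\subset Q_1$.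
   Context: "Cube" means a rectangular box. $\pi_l$ is projection onto the $l$-th coordinate axis. A collection $\{Q_1,\dots,Q_{d+1}\}$ is weakly transversal with pivot $Q_1$ if there is a permutation $(i_1,\dots,i_d)$ of $(1,\dots,d)$ with $\overline{\pi_{i_s}(Q_1)}\cap\overline{\pi_{i_s}(Q_{s+1})}=\emptyset$ for $s=1,\dots,d$. For linear maps $L_j:\mathbb{R}^n\to\mathbb{R}^{n_j}$ and $p_j\ge0$, $\mathrm{BL}(\mathbf{L},\mathbf{p})\in[0,\infty]$ is the smallest constant $C$ such that $\int_{\mathbb{R}^n}\prod_j(f_j\circ L_j)^{p_j}\le C\prod_j(\int_{\mathbb{R}^{n_j}}f_j)^{p_j}$ for all nonnegative $f_j\in L^1(\mathbb{R}^{n_j})$. (The maps are $L_\ell=(d\gamma_\ell(x^1_\ell))^*$ and $L_{d+\ell}=(d\Gamma(x^{\ell+1}))^*$ for $\Gamma(x)=(x,|x|^2)$ and $\gamma_\ell(s)=(s e_\ell,s^2)$.) *)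

theory Defs
  imports "HOL-Analysis.Analysis"
begin

definition is_cube :: "(real^'d) set \<Rightarrow> bool" where
  "is_cube Q \<longleftrightarrow> (\<exists>a b. (\<forall>i. a $ i \<le> b $ i) \<and> Q = cbox a b)"

text \<open>Weak transversality with pivot Q0 of the collection {Q0} together with Q l (l in 'd),
  where Q l plays the role of Q_{l+1}.  The coordinate index set of R^d is also 'd.\<close>
definition weakly_transversal :: "(real^'d) set \<Rightarrow> ('d \<Rightarrow> (real^'d) set) \<Rightarrow> bool" where
  "weakly_transversal Q0 Q \<longleftrightarrow>
     (\<exists>\<sigma>::'d \<Rightarrow> 'd. bij \<sigma> \<and>
        (\<forall>s. closure ((\<lambda>x. x $ \<sigma> s) ` Q0) \<inter> closure ((\<lambda>x. x $ \<sigma> s) ` Q s) = {}))"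

definition cube_partition :: "(real^'d) set \<Rightarrow> (real^'d) set set \<Rightarrow> bool" where
  "cube_partition Q P \<longleftrightarrow> finite P \<and> (\<forall>R\<in>P. is_cube R \<and> R \<subseteq> Q) \<and> \<Union>P = Q \<and>
     (\<forall>R\<in>P. \<forall>R'\<in>P. R \<noteq> R' \<longrightarrow> interior R \<inter> interior R' = {})"

definition BL :: "('i::finite \<Rightarrow> 'a::euclidean_space \<Rightarrow> 'b::euclidean_space) \<Rightarrow> ('i \<Rightarrow> real)
    \<Rightarrow> ('k::finite \<Rightarrow> 'a \<Rightarrow> 'c::euclidean_space) \<Rightarrow> ('k \<Rightarrow> real) \<Rightarrow> ennreal" where
  "BL L p M q = Inf {C. \<forall>(f::'i \<Rightarrow> 'b \<Rightarrow> real) (g::'k \<Rightarrow> 'c \<Rightarrow> real).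
      (\<forall>i. f i \<in> borel_measurable lborel \<and> (\<forall>y. 0 \<le> f i y) \<and> integrable lborel (f i)) \<and>
      (\<forall>k. g k \<in> borel_measurable lborel \<and> (\<forall>y. 0 \<le> g k y) \<and> integrable lborel (g k)) \<longrightarrow>
      (\<integral>\<^sup>+ x. ennreal ((\<Prod>i\<in>UNIV. f i (L i x) powr p i) * (\<Prod>k\<in>UNIV. g k (M k x) powr q k)) \<partial>lborel)
        \<le> C * ennreal ((\<Prod>i\<in>UNIV. (\<integral>y. f i y \<partial>lborel) powr p i) *
                        (\<Prod>k\<in>UNIV. (\<integral>y. g k y \<partial>lborel) powr q k))}"

text \<open>R^{d+1} is modelled as real^'d \<times> real, v = (v_1..v_d, v_{d+1}).\<close>
definition Lmap :: "real^'d \<Rightarrow> 'd \<Rightarrow> ((real^'d) \<times> real) \<Rightarrow> real" where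
  "Lmap x1 l v = fst v $ l + 2 * x1 $ l * snd v"

definition Mmap :: "('d \<Rightarrow> real^'d) \<Rightarrow> 'd \<Rightarrow> ((real^'d) \<times> real) \<Rightarrow> real^'d" where
  "Mmap x l v = (\<chi> k. fst v $ k + 2 * x l $ k * snd v)"

end

theory Submission
  imports Defs
begin

(*
  Under weak transversality, every choice of points admits a bijection \<sigma> with
  x1 $ \<sigma> s \<noteq> x s $ \<sigma> s.  Pairing the factor L_{\<sigma> s} with M_s, the shear
  (y, t) \<mapsto> (y_k + 2 t x1_k, y + 2 t x s) with k = \<sigma> s integrates f \<otimes> g to
  \<integral>f \<integral>g / |2 (x1_k - (x s)_k)|, and the arithmetic-geometric mean inequality
  turns these d pairings into a finite Brascamp-Lieb bound.

  Conversely, if no such bijection exists, Hall's marriage theorem gives a set S of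
  indices and a set K of coordinates with |K| < |S| such that x s agrees with x1
  outside K for every s in S.  Testing the inequality with boxes of width \<delta> in the
  coordinates outside K (and, for s \<notin> S, with their averages along x s - x1) gives
  \<delta>^(q + m d) \<le> C \<delta>^(m + m d) with q = d - |S| < m = d - |K|, which fails as \<delta> \<rightarrow> 0.
  So finiteness of BL forces the bijection pointwise; the condition is open and the
  configurations form a compact set, so a Lebesgue number makes it uniform, and any
  fine enough partition into sub-cubes has weakly transversal cells.
*)

section \<open>Brascamp-Lieb bounds\<close>

definition BL_input :: "('b::euclidean_space \<Rightarrow> real) \<Rightarrow> bool" where
  "BL_input f \<longleftrightarrow> f \<in> borel_measurable lborel \<and> (\<forall>y. 0 \<le> f y) \<and> integrable lborel f"

definition BL_bound :: "('i::finite \<Rightarrow> 'a::euclidean_space \<Rightarrow> 'b::euclidean_space) \<Rightarrow> ('i \<Rightarrow> real)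
    \<Rightarrow> ('k::finite \<Rightarrow> 'a \<Rightarrow> 'c::euclidean_space) \<Rightarrow> ('k \<Rightarrow> real) \<Rightarrow> ennreal \<Rightarrow> bool" where
  "BL_bound L p M q C \<longleftrightarrow> (\<forall>f g. (\<forall>i. BL_input (f i)) \<and> (\<forall>k. BL_input (g k)) \<longrightarrow>
      (\<integral>\<^sup>+ x. ennreal ((\<Prod>i\<in>UNIV. f i (L i x) powr p i) * (\<Prod>k\<in>UNIV. g k (M k x) powr q k)) \<partial>lborel)
        \<le> C * ennreal ((\<Prod>i\<in>UNIV. (\<integral>y. f i y \<partial>lborel) powr p i) *
                        (\<Prod>k\<in>UNIV. (\<integral>y. g k y \<partial>lborel) powr q k)))"

lemma BL_eq_Inf_bounds: "BL L p M q = Inf {C. BL_bound L p M q C}"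
  unfolding BL_def BL_bound_def BL_input_def ..

lemma BL_le_bound: "BL_bound L p M q C \<Longrightarrow> BL L p M q \<le> C"
  unfolding BL_eq_Inf_bounds by (rule Inf_lower) simp

lemma BL_finite_imp_bound:
  assumes "BL L p M q < \<infinity>"
  obtains c where "0 \<le> c" and "BL_bound L p M q (ennreal c)"
proof -
  from assms obtain C where "BL_bound L p M q C" and "C < top"
    unfolding BL_eq_Inf_bounds infinity_ennreal_def Inf_less_iff by blast
  then show ?thesis
    using that by (cases C) auto
qed

lemma BL_inputD:
  assumes "BL_input f"
  shows "f \<in> borel_measurable borel" and "0 \<le> f y" and "0 \<le> (\<integral>y. f y \<partial>lborel)"
    and "(\<integral>\<^sup>+y. f y \<partial>lborel) = ennreal (\<integral>y. f y \<partial>lborel)"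
  using assms by (auto simp: BL_input_def nn_integral_eq_integral)

lemma Mmap_eq: "Mmap x l v = fst v + snd v *\<^sub>R (2 *\<^sub>R x l)"
  unfolding Mmap_def by (vector algebra_simps)

section \<open>Finiteness when the points differ along a bijection\<close>

lemma nn_integral_lborel_translate:
  fixes f :: "'a::euclidean_space \<Rightarrow> ennreal"
  assumes [measurable]: "f \<in> borel_measurable borel"
  shows "(\<integral>\<^sup>+x. f (x + c) \<partial>lborel) = (\<integral>\<^sup>+x. f x \<partial>lborel)"
proof -
  have "(\<integral>\<^sup>+x. f x \<partial>lborel) = (\<integral>\<^sup>+x. f x \<partial>distr lborel borel ((+) c))"
    by (simp add: lborel_distr_plus)
  also have "\<dots> = (\<integral>\<^sup>+x. f (c + x) \<partial>lborel)"
    by (subst nn_integral_distr) auto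
  finally show ?thesis
    by (simp add: add.commute)
qed

lemma measurable_shear [measurable]:
  "(\<lambda>v::(real^'d) \<times> real. fst v $ k + \<alpha> * snd v) \<in> borel_measurable (lborel \<Otimes>\<^sub>M lborel)"
  "(\<lambda>v::(real^'d) \<times> real. fst v + snd v *\<^sub>R b) \<in> lborel \<Otimes>\<^sub>M lborel \<rightarrow>\<^sub>M borel"
  by (simp_all add: lborel_prod borel_measurable_continuous_onI continuous_intros)

lemma nn_integral_shear_product:
  fixes f :: "real \<Rightarrow> real" and g :: "real^'d \<Rightarrow> real" and b :: "real^'d"
  assumes [measurable]: "f \<in> borel_measurable borel" "g \<in> borel_measurable borel"
    and f_nonneg: "\<And>y. 0 \<le> f y" and g_nonneg: "\<And>y. 0 \<le> g y" and ne: "\<alpha> \<noteq> b $ k"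
  shows "(\<integral>\<^sup>+v. ennreal (f (fst v $ k + \<alpha> * snd v) * g (fst v + snd v *\<^sub>R b)) \<partial>lborel)
    = ennreal (1 / \<bar>\<alpha> - b $ k\<bar>) * (\<integral>\<^sup>+y. f y \<partial>lborel) * (\<integral>\<^sup>+y. g y \<partial>lborel)"
proof -
  define c where "c = \<alpha> - b $ k"
  have "c \<noteq> 0"
    using ne by (simp add: c_def)
  have inner: "(\<integral>\<^sup>+t. ennreal (f (u $ k + c * t)) \<partial>lborel) = ennreal (1 / \<bar>c\<bar>) * (\<integral>\<^sup>+y. f y \<partial>lborel)"
    for u :: "real^'d"
    using nn_integral_real_affine[of "\<lambda>y. ennreal (f y)" c "u $ k"] \<open>c \<noteq> 0\<close>
    by (simp add: ennreal_mult[symmetric] mult.assoc[symmetric] del: ennreal_mult')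
  have "(\<integral>\<^sup>+v. ennreal (f (fst v $ k + \<alpha> * snd v) * g (fst v + snd v *\<^sub>R b)) \<partial>lborel)
      = (\<integral>\<^sup>+t. \<integral>\<^sup>+y. ennreal (f (y $ k + \<alpha> * t) * g (y + t *\<^sub>R b)) \<partial>lborel \<partial>lborel)"
    by (subst lborel_prod[symmetric], subst lborel_pair.nn_integral_snd[symmetric]) auto
  also have "\<dots> = (\<integral>\<^sup>+t. \<integral>\<^sup>+u. ennreal (f (u $ k + c * t) * g u) \<partial>lborel \<partial>lborel)"
  proof (rule nn_integral_cong)
    fix t :: real
    show "(\<integral>\<^sup>+y. ennreal (f (y $ k + \<alpha> * t) * g (y + t *\<^sub>R b)) \<partial>lborel)
        = (\<integral>\<^sup>+u. ennreal (f (u $ k + c * t) * g u) \<partial>lborel)"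
      using nn_integral_lborel_translate[of "\<lambda>u. ennreal (f (u $ k + c * t) * g u)" "t *\<^sub>R b"]
      by (simp add: c_def algebra_simps)
  qed
  also have "\<dots> = (\<integral>\<^sup>+u. ennreal (g u) * \<integral>\<^sup>+t. ennreal (f (u $ k + c * t)) \<partial>lborel \<partial>lborel)"
    by (subst lborel_pair.Fubini', simp, rule nn_integral_cong)
       (simp add: ennreal_mult f_nonneg g_nonneg nn_integral_cmult mult.commute del: ennreal_mult')
  also have "\<dots> = ennreal (1 / \<bar>c\<bar>) * (\<integral>\<^sup>+y. f y \<partial>lborel) * (\<integral>\<^sup>+u. g u \<partial>lborel)"
    unfolding inner by (subst nn_integral_multc) (auto simp: mult_ac)
  finally show ?thesis
    by (simp add: c_def)
qed

lemma nn_integral_prod_powr_le: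
  fixes h :: "'i::finite \<Rightarrow> 'a \<Rightarrow> real" and A :: "'i \<Rightarrow> real"
  assumes meas: "\<And>i. h i \<in> borel_measurable M" and h_nonneg: "\<And>i x. 0 \<le> h i x"
    and A_nonneg: "\<And>i. 0 \<le> A i" and bound: "\<And>i. (\<integral>\<^sup>+x. h i x \<partial>M) \<le> ennreal (A i)"
  shows "(\<integral>\<^sup>+x. ennreal (\<Prod>i\<in>UNIV. h i x powr (1 / CARD('i))) \<partial>M)
    \<le> ennreal (\<Prod>i\<in>UNIV. A i powr (1 / CARD('i)))"
proof (cases "\<exists>i. A i = 0")
  case True
  then obtain i0 where "A i0 = 0" by blast
  with bound[of i0] have "AE x in M. h i0 x = 0"
    using meas h_nonneg by (simp add: nn_integral_0_iff_AE)
  then have "AE x in M. ennreal (\<Prod>i\<in>UNIV. h i x powr (1 / CARD('i))) = 0"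
    by eventually_elim (subst prod_zero, auto intro: bexI[of _ i0])
  then show ?thesis
    by (simp add: nn_integral_0_iff_AE[symmetric] nn_integral_cong_AE)
next
  case False
  with A_nonneg have A_pos: "0 < A i" for i
    by (metis less_eq_real_def)
  define n where "n = real CARD('i)"
  define P where "P = (\<Prod>i\<in>UNIV. A i powr (1 / CARD('i)))"
  have "P \<ge> 0"
    by (simp add: P_def prod_nonneg)
  have AM_GM: "(\<Prod>i\<in>UNIV. h i x powr (1 / CARD('i))) \<le> P * (\<Sum>i\<in>UNIV. h i x / (n * A i))" for x
  proof -
    have "(\<Prod>i\<in>UNIV. h i x powr (1 / CARD('i))) = P * (\<Prod>i\<in>UNIV. h i x / A i) powr (1 / CARD('i))"
      using A_pos h_nonneg
      by (simp add: P_def prod_powr_distrib powr_mult[symmetric] prod.distrib[symmetric]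
          less_imp_le less_imp_neq[symmetric])
    also have "\<dots> \<le> P * (\<Sum>i\<in>UNIV. h i x / A i / n)"
      using arith_geom_mean[of UNIV "\<lambda>i. h i x / A i"] A_pos h_nonneg \<open>P \<ge> 0\<close>
      by (intro mult_left_mono) (auto simp: n_def less_imp_le)
    finally show ?thesis
      by (simp add: field_simps)
  qed
  have "(\<integral>\<^sup>+x. ennreal (\<Prod>i\<in>UNIV. h i x powr (1 / CARD('i))) \<partial>M)
      \<le> (\<integral>\<^sup>+x. ennreal P * (\<Sum>i\<in>UNIV. ennreal (1 / (n * A i)) * h i x) \<partial>M)"
    using AM_GM A_pos h_nonneg \<open>P \<ge> 0\<close>
    by (intro nn_integral_mono)
       (simp add: ennreal_mult[symmetric] sum_ennreal sum_nonneg ennreal_leI n_def less_imp_le)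
  also have "\<dots> = ennreal P * (\<Sum>i\<in>UNIV. ennreal (1 / (n * A i)) * (\<integral>\<^sup>+x. h i x \<partial>M))"
    using meas by (simp add: nn_integral_cmult nn_integral_sum)
  also have "\<dots> \<le> ennreal P * (\<Sum>i\<in>UNIV. ennreal (1 / (n * A i)) * ennreal (A i))"
    by (intro mult_left_mono sum_mono bound) auto
  also have "\<dots> = ennreal P"
    using A_pos
    by (simp add: ennreal_mult[symmetric] n_def ennreal_of_nat_eq_real_of_nat less_imp_le less_imp_neq[symmetric])
  finally show ?thesis
    by (simp add: P_def)
qed

lemma nn_integral_Lmap_Mmap:
  fixes x1 :: "real^'d" and x :: "'d \<Rightarrow> real^'d"
  assumes "BL_input f" and "BL_input g" and "x1 $ k \<noteq> x s $ k"
  shows "(\<integral>\<^sup>+v. ennreal (f (Lmap x1 k v) * g (Mmap x s v)) \<partial>lborel)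
    = ennreal ((\<integral>y. f y \<partial>lborel) * (\<integral>y. g y \<partial>lborel) / \<bar>2 * (x1 $ k - x s $ k)\<bar>)"
  unfolding Lmap_def Mmap_eq using assms BL_inputD[OF assms(1)] BL_inputD[OF assms(2)]
  by (subst nn_integral_shear_product) (simp_all add: ennreal_mult[symmetric] algebra_simps)

lemma BL_finite_if_coordinates_differ:
  fixes x1 :: "real^'d" and x :: "'d \<Rightarrow> real^'d"
  assumes "bij \<sigma>" and differ: "\<And>s. x1 $ \<sigma> s \<noteq> x s $ \<sigma> s"
  shows "BL (Lmap x1) (\<lambda>_. 1 / real CARD('d)) (Mmap x) (\<lambda>_. 1 / real CARD('d)) < \<infinity>"
proof -
  define p where "p = 1 / real CARD('d)"
  define c where "c s = 1 / \<bar>2 * (x1 $ \<sigma> s - x s $ \<sigma> s)\<bar>" for s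
  define C where "C = (\<Prod>s\<in>UNIV. c s powr p)"
  have "BL_bound (Lmap x1) (\<lambda>_. p) (Mmap x) (\<lambda>_. p) (ennreal C)"
    unfolding BL_bound_def
  proof (intro allI impI, elim conjE)
    fix f :: "'d \<Rightarrow> real \<Rightarrow> real" and g :: "'d \<Rightarrow> real^'d \<Rightarrow> real"
    assume f: "\<forall>i. BL_input (f i)" and g: "\<forall>k. BL_input (g k)"
    note f_props = BL_inputD[OF f[rule_format]] and g_props = BL_inputD[OF g[rule_format]]
    define If where "If i = (\<integral>y. f i y \<partial>lborel)" for i
    define Ig where "Ig k = (\<integral>y. g k y \<partial>lborel)" for k
    have If_nonneg: "0 \<le> If i" and Ig_nonneg: "0 \<le> Ig k" and c_nonneg: "0 \<le> c s" for i k s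
      using f_props g_props by (simp_all add: If_def Ig_def c_def)
    define h where "h s v = f (\<sigma> s) (Lmap x1 (\<sigma> s) v) * g s (Mmap x s v)" for s v
    have h_meas: "h s \<in> borel_measurable lborel" for s
      unfolding h_def Lmap_def Mmap_eq lborel_prod[symmetric] using f_props(1) g_props(1) by measurable
    have h_nonneg: "0 \<le> h s v" for s v
      using f_props g_props by (simp add: h_def)
    have h_int: "(\<integral>\<^sup>+v. h s v \<partial>lborel) = ennreal (c s * If (\<sigma> s) * Ig s)" for s
      unfolding h_def using nn_integral_Lmap_Mmap[OF f[rule_format] g[rule_format] differ]
      by (simp add: c_def If_def Ig_def)
    have "(\<integral>\<^sup>+v. ennreal (\<Prod>s\<in>UNIV. h s v powr p) \<partial>lborel)
        \<le> ennreal (\<Prod>s\<in>UNIV. (c s * If (\<sigma> s) * Ig s) powr p)"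
      unfolding p_def using If_nonneg Ig_nonneg c_nonneg
      by (intro nn_integral_prod_powr_le[OF h_meas h_nonneg]) (simp_all add: h_int)
    moreover have "(\<Prod>i\<in>UNIV. f i (Lmap x1 i v) powr p) * (\<Prod>k\<in>UNIV. g k (Mmap x k v) powr p)
        = (\<Prod>s\<in>UNIV. h s v powr p)" for v
      using prod.reindex_bij_betw[OF \<open>bij \<sigma>\<close>, of "\<lambda>i. f i (Lmap x1 i v) powr p"] f_props g_props
      by (simp add: h_def powr_mult prod.distrib)
    moreover have "(\<Prod>s\<in>UNIV. (c s * If (\<sigma> s) * Ig s) powr p)
        = C * ((\<Prod>i\<in>UNIV. If i powr p) * (\<Prod>k\<in>UNIV. Ig k powr p))"
      using prod.reindex_bij_betw[OF \<open>bij \<sigma>\<close>, of "\<lambda>i. If i powr p"] If_nonneg Ig_nonneg c_nonneg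
      by (simp add: C_def powr_mult prod.distrib mult_ac)
    ultimately show "(\<integral>\<^sup>+v. ennreal ((\<Prod>i\<in>UNIV. f i (Lmap x1 i v) powr p) *
          (\<Prod>k\<in>UNIV. g k (Mmap x k v) powr p)) \<partial>lborel)
        \<le> ennreal C * ennreal ((\<Prod>i\<in>UNIV. (\<integral>y. f i y \<partial>lborel) powr p) *
          (\<Prod>k\<in>UNIV. (\<integral>y. g k y \<partial>lborel) powr p))"
      by (simp add: If_def Ig_def ennreal_mult' C_def prod_nonneg)
  qed
  then show ?thesis
    unfolding p_def by (auto dest!: BL_le_bound simp: le_less_trans[OF _ ennreal_less_top])
qed

section \<open>Infiniteness for a deficient configuration\<close>

definition sym_box :: "('d \<Rightarrow> real) \<Rightarrow> (real^'d) set" where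
  "sym_box r = {y. \<forall>k. \<bar>y $ k\<bar> \<le> r k}"

lemma sym_box_eq_cbox: "sym_box r = cbox (- (\<chi> k. r k)) (\<chi> k. r k)"
  by (auto simp: sym_box_def mem_box_cart abs_le_iff minus_le_iff)

lemma sym_box_borel [measurable]: "sym_box r \<in> sets borel"
  by (simp add: sym_box_eq_cbox)

lemma emeasure_sym_box:
  assumes "\<And>k. 0 \<le> r k"
  shows "emeasure lborel (sym_box r) = ennreal (\<Prod>k\<in>UNIV. 2 * r k)"
proof -
  let ?u = "\<chi> k. r k"
  have "emeasure lborel (sym_box r) = ennreal (measure lborel (cbox (- ?u) ?u))"
    using emeasure_lborel_cbox_finite[of "- ?u" ?u]
    by (simp add: sym_box_eq_cbox emeasure_eq_ennreal_measure)
  also have "measure lborel (cbox (- ?u) ?u) = (\<Prod>k\<in>UNIV. ?u $ k - (- ?u) $ k)"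
    using assms by (intro content_cbox_cart) (simp add: interval_ne_empty_cart)
  finally show ?thesis
    by simp
qed

lemma measurable_indicator_sheared:
  fixes B :: "'a::euclidean_space set"
  assumes "I \<in> sets borel" and "B \<in> sets borel"
  shows "(\<lambda>v::'a \<times> real. indicator I (snd v) * indicator B (fst v + snd v *\<^sub>R b) :: ennreal)
    \<in> borel_measurable (lborel \<Otimes>\<^sub>M lborel)"
proof -
  have snd_meas: "(snd :: 'a \<times> real \<Rightarrow> real) \<in> borel \<rightarrow>\<^sub>M borel"
    and shear_meas: "(\<lambda>v::'a \<times> real. fst v + snd v *\<^sub>R b) \<in> borel \<rightarrow>\<^sub>M borel"
    by (intro borel_measurable_continuous_onI continuous_intros)+
  show ?thesis
    unfolding lborel_prod measurable_lborel2 using assms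
    by (intro borel_measurable_times_ennreal measurable_compose[OF snd_meas]
        measurable_compose[OF shear_meas] borel_measurable_indicator) simp_all
qed

lemma nn_integral_indicator_sheared:
  fixes B :: "'a::euclidean_space set" and b :: 'a
  assumes [measurable]: "B \<in> sets borel" and "0 \<le> r"
  shows "(\<integral>\<^sup>+v. indicator {-r..r} (snd v) * indicator B (fst v + snd v *\<^sub>R b) \<partial>lborel)
    = ennreal (2 * r) * emeasure lborel B"
proof -
  have "(\<integral>\<^sup>+v. indicator {-r..r} (snd v) * indicator B (fst v + snd v *\<^sub>R b) \<partial>lborel)
      = (\<integral>\<^sup>+t. indicator {-r..r} t * (\<integral>\<^sup>+y. indicator B (y + t *\<^sub>R b) \<partial>lborel) \<partial>lborel)"
    by (subst lborel_prod[symmetric], subst lborel_pair.nn_integral_snd[symmetric])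
       (auto simp: nn_integral_cmult)
  also have "\<dots> = (\<integral>\<^sup>+t. indicator {-r..r} t * emeasure lborel B \<partial>lborel)"
    by (simp add: nn_integral_lborel_translate[of "indicator B"])
  also have "\<dots> = ennreal (2 * r) * emeasure lborel B"
    using \<open>0 \<le> r\<close>
    by (subst mult.commute, subst nn_integral_cmult_indicator) (auto simp: mult.commute)
  finally show ?thesis .
qed

definition segment_convolution :: "real \<Rightarrow> 'a::euclidean_space set \<Rightarrow> 'a \<Rightarrow> 'a \<Rightarrow> real" where
  "segment_convolution \<rho> B w u = enn2real (\<integral>\<^sup>+\<tau>. indicator {-\<rho>..\<rho>} \<tau> * indicator B (u - \<tau> *\<^sub>R w) \<partial>lborel)"

lemma segment_convolution_nn_integral_le:
  assumes "0 \<le> \<rho>"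
  shows "(\<integral>\<^sup>+\<tau>. indicator {-\<rho>..\<rho>} \<tau> * indicator B (u - \<tau> *\<^sub>R w) \<partial>lborel) \<le> ennreal (2 * \<rho>)"
proof -
  have "(\<integral>\<^sup>+\<tau>. indicator {-\<rho>..\<rho>} \<tau> * indicator B (u - \<tau> *\<^sub>R w) \<partial>lborel)
      \<le> (\<integral>\<^sup>+\<tau>. indicator {-\<rho>..\<rho>} \<tau> \<partial>lborel)"
    by (intro nn_integral_mono) (simp add: indicator_def)
  then show ?thesis
    using assms by simp
qed

lemma segment_convolution_input:
  fixes B :: "'a::euclidean_space set"
  assumes [measurable]: "B \<in> sets borel" and "emeasure lborel B < \<infinity>" and "0 \<le> \<rho>"
  shows "BL_input (segment_convolution \<rho> B w)"
    and "(\<integral>u. segment_convolution \<rho> B w u \<partial>lborel) = 2 * \<rho> * measure lborel B"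
proof -
  define F :: "'a \<times> real \<Rightarrow> ennreal"
    where "F v = indicator {-\<rho>..\<rho>} (snd v) * indicator B (fst v + snd v *\<^sub>R (- w))" for v
  have F_meas: "F \<in> borel_measurable (lborel \<Otimes>\<^sub>M lborel)"
    unfolding F_def by (rule measurable_indicator_sheared) simp_all
  have ennreal_conv: "ennreal (segment_convolution \<rho> B w u) = (\<integral>\<^sup>+\<tau>. F (u, \<tau>) \<partial>lborel)" for u
    using le_less_trans[OF segment_convolution_nn_integral_le[OF \<open>0 \<le> \<rho>\<close>, of B u w] ennreal_less_top]
    by (simp add: segment_convolution_def F_def)
  have meas: "segment_convolution \<rho> B w \<in> borel_measurable lborel"
    using lborel.borel_measurable_nn_integral[of "\<lambda>u \<tau>. F (u, \<tau>)" lborel] F_meas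
    by (simp add: segment_convolution_def[abs_def] F_def case_prod_beta')
  have "(\<integral>\<^sup>+u. segment_convolution \<rho> B w u \<partial>lborel) = (\<integral>\<^sup>+v. F v \<partial>lborel \<Otimes>\<^sub>M lborel)"
    by (simp add: ennreal_conv lborel.nn_integral_fst[OF F_meas])
  also have "\<dots> = ennreal (2 * \<rho>) * emeasure lborel B"
    unfolding F_def lborel_prod by (rule nn_integral_indicator_sheared) (use assms in auto)
  also have "\<dots> = ennreal (2 * \<rho> * measure lborel B)"
    using assms by (simp add: emeasure_eq_ennreal_measure ennreal_mult)
  finally have int: "(\<integral>\<^sup>+u. segment_convolution \<rho> B w u \<partial>lborel) = ennreal (2 * \<rho> * measure lborel B)" .
  have nonneg: "0 \<le> segment_convolution \<rho> B w u" for u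
    by (simp add: segment_convolution_def)
  show "BL_input (segment_convolution \<rho> B w)"
    unfolding BL_input_def using meas nonneg int by (auto intro!: integrableI_nonneg)
  show "(\<integral>u. segment_convolution \<rho> B w u \<partial>lborel) = 2 * \<rho> * measure lborel B"
    using meas nonneg int \<open>0 \<le> \<rho>\<close> by (subst integral_eq_nn_integral) auto
qed

lemma segment_convolution_lower:
  assumes "0 < \<epsilon>" and "\<bar>T\<bar> + \<epsilon> \<le> \<rho>" and "\<And>\<tau>. \<bar>\<tau>\<bar> \<le> \<epsilon> \<Longrightarrow> z + \<tau> *\<^sub>R w \<in> B"
  shows "2 * \<epsilon> \<le> segment_convolution \<rho> B w (z + T *\<^sub>R w)"
proof -
  have "ennreal (2 * \<epsilon>) = (\<integral>\<^sup>+\<tau>. indicator {T - \<epsilon>..T + \<epsilon>} \<tau> \<partial>lborel)"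
    using assms(1) by simp
  also have "\<dots> \<le> (\<integral>\<^sup>+\<tau>. indicator {-\<rho>..\<rho>} \<tau> * indicator B (z + T *\<^sub>R w - \<tau> *\<^sub>R w) \<partial>lborel)"
  proof (intro nn_integral_mono)
    fix \<tau>
    have "z + T *\<^sub>R w - \<tau> *\<^sub>R w = z + (T - \<tau>) *\<^sub>R w"
      by (simp add: algebra_simps)
    show "indicator {T - \<epsilon>..T + \<epsilon>} \<tau> \<le> (indicator {-\<rho>..\<rho>} \<tau> * indicator B (z + T *\<^sub>R w - \<tau> *\<^sub>R w) :: ennreal)"
      unfolding \<open>z + T *\<^sub>R w - \<tau> *\<^sub>R w = z + (T - \<tau>) *\<^sub>R w\<close>
      using assms(2) assms(3)[of "T - \<tau>"] by (auto simp: indicator_def abs_le_iff)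
  qed
  finally have lower: "ennreal (2 * \<epsilon>) \<le> (\<integral>\<^sup>+\<tau>. indicator {-\<rho>..\<rho>} \<tau> * indicator B (z + T *\<^sub>R w - \<tau> *\<^sub>R w) \<partial>lborel)" .
  have "0 \<le> \<rho>"
    using assms(1,2) by linarith
  then have "(\<integral>\<^sup>+\<tau>. indicator {-\<rho>..\<rho>} \<tau> * indicator B (z + T *\<^sub>R w - \<tau> *\<^sub>R w) \<partial>lborel) < top"
    by (rule le_less_trans[OF segment_convolution_nn_integral_le]) simp_all
  from enn2real_mono[OF lower this] show ?thesis
    using assms(1) by (simp add: segment_convolution_def)
qed

lemma prod_if_mem_UNIV:
  "(\<Prod>k\<in>(UNIV::'a::finite set). if k \<in> K then u else v) = u ^ card K * v ^ (CARD('a) - card K)"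
proof -
  have "(\<Prod>k\<in>UNIV. if k \<in> K then u else v) = u ^ card K * v ^ card (- K)"
    by (simp add: prod.If_cases Int_UNIV_left)
  then show ?thesis
    by (simp add: Compl_eq_Diff_UNIV card_Diff_subset)
qed

lemma prod_powr_inverse_card_power:
  fixes a :: "'i::finite \<Rightarrow> real"
  assumes "\<And>i. 0 \<le> a i"
  shows "(\<Prod>i\<in>UNIV. a i powr (1 / CARD('i))) ^ CARD('i) = (\<Prod>i\<in>UNIV. a i)"
proof -
  have "(a i powr (1 / CARD('i))) ^ CARD('i) = a i" for i
    using assms[of i] by (cases "a i = 0") (simp_all add: powr_realpow[symmetric] powr_powr)
  then show ?thesis
    by (simp add: prod_power_distrib)
qed

lemma no_power_bound_by_higher_power:
  fixes \<alpha> \<beta> :: real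
  assumes "0 < \<alpha>" and "a < b" and bound: "\<And>\<delta>. 0 < \<delta> \<Longrightarrow> \<delta> \<le> 1 \<Longrightarrow> \<alpha> * \<delta> ^ a \<le> \<beta> * \<delta> ^ b"
  shows False
proof -
  define \<delta> where "\<delta> = min 1 (\<alpha> / (2 * (\<bar>\<beta>\<bar> + 1)))"
  have \<delta>: "0 < \<delta>" "\<delta> \<le> 1"
    using assms(1) by (auto simp: \<delta>_def)
  have "\<alpha> * \<delta> ^ a \<le> \<beta> * \<delta> ^ b"
    using bound \<delta> .
  also have "\<dots> \<le> \<bar>\<beta>\<bar> * \<delta> ^ Suc a"
    using \<delta> \<open>a < b\<close> by (intro mult_mono power_decreasing) auto
  finally have "\<alpha> \<le> \<bar>\<beta>\<bar> * \<delta>"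
    using \<delta> by (simp add: mult_ac)
  also have "\<bar>\<beta>\<bar> * \<delta> \<le> \<bar>\<beta>\<bar> * (\<alpha> / (2 * (\<bar>\<beta>\<bar> + 1)))"
    by (intro mult_left_mono) (auto simp: \<delta>_def)
  also have "\<dots> < \<alpha>"
    using assms(1) by (simp add: field_simps) (simp add: add_nonneg_pos)
  finally show False
    by simp
qed

locale deficiency_test =
  fixes a :: "real^'d" and x :: "'d \<Rightarrow> real^'d" and K S :: "'d set" and W \<delta> :: real
  assumes agree: "\<And>s k. s \<in> S \<Longrightarrow> k \<notin> K \<Longrightarrow> x s $ k = a $ k"
    and W: "\<And>s k. \<bar>x s $ k - a $ k\<bar> \<le> W"
    and \<delta>_pos: "0 < \<delta>" and \<delta>_le_1: "\<delta> \<le> 1"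
begin

text \<open>
  The boxes are thin (width \<open>\<delta>\<close>) exactly in the coordinates outside \<open>K\<close>, which
  \<open>M s\<close> does not move for \<open>s \<in> S\<close>.  For \<open>s \<notin> S\<close>, \<open>M s\<close> shears the region along
  \<open>x s - a\<close>; averaging the box over that segment keeps \<open>test_g s \<ge> 2 * \<eta>\<close> on the whole
  region while its integral stays a constant multiple of the box volume.
\<close>

definition \<Lambda> :: real where "\<Lambda> = 1 + 2 * W"

definition \<eta> :: real where "\<eta> = \<delta> / \<Lambda>"

definition side :: "'d \<Rightarrow> real" where "side k = (if k \<in> K then 1 else \<delta>)"

definition test_f :: "'d \<Rightarrow> real \<Rightarrow> real" where "test_f i = indicator {- side i..side i}"

definition test_g :: "'d \<Rightarrow> real^'d \<Rightarrow> real" where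
  "test_g s = (if s \<in> S then indicator (sym_box (\<lambda>k. \<Lambda> * side k))
    else segment_convolution 3 (sym_box (\<lambda>k. 2 * side k)) (x s - a))"

lemma W_nonneg: "0 \<le> W"
  using W by (meson abs_ge_zero order_trans)

lemma \<Lambda>_ge_1: "1 \<le> \<Lambda>"
  using W_nonneg by (simp add: \<Lambda>_def)

lemma side_pos: "0 < side k" and \<delta>_le_side: "\<delta> \<le> side k"
  using \<delta>_pos \<delta>_le_1 by (simp_all add: side_def)

lemma \<eta>_pos: "0 < \<eta>" and \<eta>_le_1: "\<eta> \<le> 1" and \<eta>_W_le: "\<eta> * W \<le> \<delta>"
proof -
  show "0 < \<eta>" "\<eta> \<le> 1"
    using \<delta>_pos \<delta>_le_1 \<Lambda>_ge_1 by (simp_all add: \<eta>_def field_simps)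
  have "\<eta> * W = \<delta> * (W / \<Lambda>)"
    by (simp add: \<eta>_def)
  also have "\<dots> \<le> \<delta> * 1"
    using \<delta>_pos W_nonneg by (intro mult_left_mono) (auto simp: \<Lambda>_def)
  finally show "\<eta> * W \<le> \<delta>"
    by simp
qed

lemma prod_side: "(\<Prod>k\<in>UNIV. 2 * side k) = 2 ^ CARD('d) * \<delta> ^ (CARD('d) - card K)"
  by (simp add: side_def prod.distrib prod_if_mem_UNIV)

lemma test_f_input: "BL_input (test_f i)"
  and integral_test_f: "(\<integral>y. test_f i y \<partial>lborel) = 2 * side i"
  using side_pos[of i] by (auto simp: test_f_def BL_input_def less_imp_le)

lemma test_g_input: "BL_input (test_g s)"
  and integral_test_g: "(\<integral>y. test_g s y \<partial>lborel) = (if s \<in> S then \<Lambda> ^ CARD('d) * (\<Prod>k\<in>UNIV. 2 * side k)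
    else 6 * 2 ^ CARD('d) * (\<Prod>k\<in>UNIV. 2 * side k))"
proof -
  have side_nonneg: "0 \<le> c * side k" if "0 \<le> c" for c k
    using that side_pos[of k] by simp
  have box_measure: "measure lborel (sym_box (\<lambda>k. c * side k)) = c ^ CARD('d) * (\<Prod>k\<in>UNIV. 2 * side k)"
    if "0 \<le> c" for c
    using emeasure_sym_box[of "\<lambda>k. c * side k"] side_nonneg[OF that] that side_pos
    by (simp add: measure_def prod.distrib prod_nonneg less_imp_le mult_ac)
  have box_finite: "emeasure lborel (sym_box (\<lambda>k. c * side k)) < \<infinity>" for c
    unfolding sym_box_eq_cbox by (rule emeasure_lborel_cbox_finite)
  show "BL_input (test_g s)"
    using \<Lambda>_ge_1 box_finite segment_convolution_input(1)[of "sym_box (\<lambda>k. 2 * side k)"]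
    by (simp add: test_g_def BL_input_def)
  show "(\<integral>y. test_g s y \<partial>lborel) = (if s \<in> S then \<Lambda> ^ CARD('d) * (\<Prod>k\<in>UNIV. 2 * side k)
    else 6 * 2 ^ CARD('d) * (\<Prod>k\<in>UNIV. 2 * side k))"
    using \<Lambda>_ge_1 box_measure box_finite segment_convolution_input(2)[of "sym_box (\<lambda>k. 2 * side k)"]
    by (simp add: test_g_def)
qed

lemma test_g_lower:
  assumes t: "\<bar>t\<bar> \<le> 1" and z: "z \<in> sym_box side"
  shows "(if s \<in> S then 1 else 2 * \<eta>) \<le> test_g s (z + (2 * t) *\<^sub>R (x s - a))"
proof -
  have z_bound: "\<bar>z $ k\<bar> \<le> side k" for k
    using z by (simp add: sym_box_def)
  have shift_bound: "\<bar>z $ k + \<tau> * (x s - a) $ k\<bar> \<le> side k + \<bar>\<tau>\<bar> * W" for \<tau> k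
    using abs_triangle_ineq[of "z $ k" "\<tau> * (x s - a) $ k"] z_bound[of k]
      mult_left_mono[OF W[of s k], of "\<bar>\<tau>\<bar>"]
    by (simp add: abs_mult)
  show ?thesis
  proof (cases "s \<in> S")
    case True
    have "\<bar>(z + (2 * t) *\<^sub>R (x s - a)) $ k\<bar> \<le> \<Lambda> * side k" for k
    proof (cases "k \<in> K")
      case True
      then show ?thesis
        using shift_bound[where \<tau> = "2 * t" and k = k] mult_right_mono[OF t W_nonneg]
        by (simp add: \<Lambda>_def side_def abs_mult mult.assoc)
    next
      case False
      then show ?thesis
        using z_bound[of k] agree[OF \<open>s \<in> S\<close> False] \<Lambda>_ge_1 side_pos[of k]
        by (simp add: mult_le_cancel_right1 order_trans)
    qed
    then show ?thesis
      using True by (simp add: test_g_def sym_box_def)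
  next
    case False
    have "2 * \<eta> \<le> segment_convolution 3 (sym_box (\<lambda>k. 2 * side k)) (x s - a) (z + (2 * t) *\<^sub>R (x s - a))"
    proof (rule segment_convolution_lower)
      show "\<bar>2 * t\<bar> + \<eta> \<le> 3"
        using t \<eta>_le_1 by simp
      show "z + \<tau> *\<^sub>R (x s - a) \<in> sym_box (\<lambda>k. 2 * side k)" if "\<bar>\<tau>\<bar> \<le> \<eta>" for \<tau>
      proof -
        have "\<bar>\<tau>\<bar> * W \<le> \<delta>"
          using that W_nonneg \<eta>_W_le by (meson mult_right_mono order_trans)
        then have "\<bar>(z + \<tau> *\<^sub>R (x s - a)) $ k\<bar> \<le> 2 * side k" for k
          using shift_bound[where \<tau> = \<tau> and k = k] \<delta>_le_side[of k] by simp
        then show ?thesis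
          by (simp add: sym_box_def)
      qed
    qed (rule \<eta>_pos)
    then show ?thesis
      using False by (simp add: test_g_def)
  qed
qed

lemma test_integrand_lower:
  assumes "\<bar>snd v\<bar> \<le> 1" and "fst v + snd v *\<^sub>R (2 *\<^sub>R a) \<in> sym_box side"
  shows "(\<Prod>s\<in>UNIV. (if s \<in> S then 1 else 2 * \<eta>) powr (1 / CARD('d)))
    \<le> (\<Prod>i\<in>UNIV. test_f i (Lmap a i v) powr (1 / CARD('d))) *
       (\<Prod>s\<in>UNIV. test_g s (Mmap x s v) powr (1 / CARD('d)))"
proof -
  define z where "z = fst v + snd v *\<^sub>R (2 *\<^sub>R a)"
  have "\<bar>z $ i\<bar> \<le> side i" and "Lmap a i v = z $ i" for i
    using assms(2) by (simp_all add: Lmap_def z_def sym_box_def)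
  then have f_one: "test_f i (Lmap a i v) = 1" for i
    by (simp add: test_f_def indicator_def abs_le_iff minus_le_iff)
  have "Mmap x s v = z + (2 * snd v) *\<^sub>R (x s - a)" for s
    by (simp add: Mmap_eq z_def algebra_simps)
  then have "(if s \<in> S then 1 else 2 * \<eta>) \<le> test_g s (Mmap x s v)" for s
    using test_g_lower assms by (simp add: z_def)
  then have "(\<Prod>s\<in>UNIV. (if s \<in> S then 1 else 2 * \<eta>) powr (1 / CARD('d)))
      \<le> (\<Prod>s\<in>UNIV. test_g s (Mmap x s v) powr (1 / CARD('d)))"
    using powr_mono2 \<eta>_pos by (intro prod_mono) simp
  then show ?thesis
    by (simp add: f_one)
qed

lemma test_integral_lower:
  "ennreal (2 * (\<Prod>k\<in>UNIV. 2 * side k) * (\<Prod>s\<in>UNIV. (if s \<in> S then 1 else 2 * \<eta>) powr (1 / CARD('d))))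
    \<le> (\<integral>\<^sup>+v. ennreal ((\<Prod>i\<in>UNIV. test_f i (Lmap a i v) powr (1 / CARD('d))) *
        (\<Prod>s\<in>UNIV. test_g s (Mmap x s v) powr (1 / CARD('d)))) \<partial>lborel)"
proof -
  define \<kappa> where "\<kappa> = (\<Prod>s\<in>UNIV. (if s \<in> S then 1 else 2 * \<eta>) powr (1 / CARD('d)))"
  define R :: "(real^'d) \<times> real \<Rightarrow> ennreal"
    where "R v = indicator {-1..1} (snd v) * indicator (sym_box side) (fst v + snd v *\<^sub>R (2 *\<^sub>R a))" for v
  have "R \<in> borel_measurable (lborel \<Otimes>\<^sub>M lborel)"
    unfolding R_def[abs_def] by (rule measurable_indicator_sheared) simp_all
  then have R_meas: "R \<in> borel_measurable lborel"
    by (simp add: lborel_prod)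
  have "ennreal (2 * (\<Prod>k\<in>UNIV. 2 * side k) * \<kappa>) = (\<integral>\<^sup>+v. R v \<partial>lborel) * ennreal \<kappa>"
    using nn_integral_indicator_sheared[of "sym_box side" 1 "2 *\<^sub>R a"] emeasure_sym_box[of side] side_pos
    by (simp add: R_def \<kappa>_def less_imp_le prod_nonneg ennreal_mult)
  also have "\<dots> = (\<integral>\<^sup>+v. R v * ennreal \<kappa> \<partial>lborel)"
    using R_meas by (rule nn_integral_multc[symmetric])
  also have "\<dots> \<le> (\<integral>\<^sup>+v. ennreal ((\<Prod>i\<in>UNIV. test_f i (Lmap a i v) powr (1 / CARD('d))) *
        (\<Prod>s\<in>UNIV. test_g s (Mmap x s v) powr (1 / CARD('d)))) \<partial>lborel)"
    using test_integrand_lower by (intro nn_integral_mono) (auto simp: R_def \<kappa>_def indicator_def ennreal_leI)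
  finally show ?thesis
    by (simp add: \<kappa>_def)
qed

lemma test_inequality:
  assumes bound: "BL_bound (Lmap a) (\<lambda>_. 1 / real CARD('d)) (Mmap x) (\<lambda>_. 1 / real CARD('d)) (ennreal c)"
    and "0 \<le> c"
  defines "V \<equiv> \<Prod>k\<in>UNIV. 2 * side k"
  shows "(2 * V) ^ CARD('d) * (2 * \<eta>) ^ (CARD('d) - card S)
    \<le> c ^ CARD('d) * V * (\<Lambda> ^ CARD('d) * V) ^ card S * (6 * 2 ^ CARD('d) * V) ^ (CARD('d) - card S)"
proof -
  define p where "p = 1 / real CARD('d)"
  define \<kappa> where "\<kappa> = (\<Prod>s\<in>UNIV. (if s \<in> S then 1 else 2 * \<eta>) powr p)"
  define G where "G s = (if s \<in> S then \<Lambda> ^ CARD('d) * V else 6 * 2 ^ CARD('d) * V)" for s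
  have V_nonneg: "0 \<le> V" and G_nonneg: "0 \<le> G s" for s
    using side_pos \<Lambda>_ge_1 by (simp_all add: V_def G_def prod_nonneg less_imp_le)
  define RHS where "RHS = (\<Prod>i\<in>UNIV. (2 * side i) powr p) * (\<Prod>s\<in>UNIV. G s powr p)"
  have "(\<integral>\<^sup>+v. ennreal ((\<Prod>i\<in>UNIV. test_f i (Lmap a i v) powr p) *
      (\<Prod>s\<in>UNIV. test_g s (Mmap x s v) powr p)) \<partial>lborel) \<le> ennreal c * ennreal RHS"
    using bound[unfolded BL_bound_def, rule_format, of test_f test_g] test_f_input test_g_input
    unfolding RHS_def G_def V_def p_def by (simp add: integral_test_f integral_test_g)
  with test_integral_lower have "ennreal (2 * V * \<kappa>) \<le> ennreal c * ennreal RHS"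
    unfolding V_def \<kappa>_def p_def by (rule order_trans)
  then have "2 * V * \<kappa> \<le> c * RHS"
    using \<open>0 \<le> c\<close> by (simp add: RHS_def ennreal_mult[symmetric] prod_nonneg)
  then have "(2 * V * \<kappa>) ^ CARD('d) \<le> (c * RHS) ^ CARD('d)"
    using V_nonneg by (intro power_mono) (simp_all add: \<kappa>_def prod_nonneg)
  moreover have "\<kappa> ^ CARD('d) = (2 * \<eta>) ^ (CARD('d) - card S)"
    unfolding \<kappa>_def p_def
    by (subst prod_powr_inverse_card_power) (use \<eta>_pos in \<open>auto simp: prod_if_mem_UNIV\<close>)
  moreover have "RHS ^ CARD('d) = V * (\<Lambda> ^ CARD('d) * V) ^ card S * (6 * 2 ^ CARD('d) * V) ^ (CARD('d) - card S)"
  proof -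
    have "RHS ^ CARD('d) = V * (\<Prod>s\<in>UNIV. G s)"
      unfolding RHS_def p_def power_mult_distrib V_def
      by (subst (1 2) prod_powr_inverse_card_power) (use side_pos G_nonneg in \<open>auto simp: less_imp_le\<close>)
    then show ?thesis
      by (simp add: G_def prod_if_mem_UNIV mult.assoc)
  qed
  ultimately show ?thesis
    by (simp add: power_mult_distrib mult_ac)
qed

end

lemma BL_infinite_if_deficient:
  fixes a :: "real^'d" and x :: "'d \<Rightarrow> real^'d"
  assumes "card K < card S" and agree: "\<And>s k. s \<in> S \<Longrightarrow> k \<notin> K \<Longrightarrow> x s $ k = a $ k"
  shows "BL (Lmap a) (\<lambda>_. 1 / real CARD('d)) (Mmap x) (\<lambda>_. 1 / real CARD('d)) = \<infinity>"
proof (rule ccontr)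
  assume "BL (Lmap a) (\<lambda>_. 1 / real CARD('d)) (Mmap x) (\<lambda>_. 1 / real CARD('d)) \<noteq> \<infinity>"
  then obtain c where "0 \<le> c"
    and bound: "BL_bound (Lmap a) (\<lambda>_. 1 / real CARD('d)) (Mmap x) (\<lambda>_. 1 / real CARD('d)) (ennreal c)"
    using BL_finite_imp_bound by (metis infinity_ennreal_def top.not_eq_extremum)
  define W where "W = (\<Sum>s\<in>UNIV. \<Sum>k\<in>UNIV. \<bar>x s $ k - a $ k\<bar>)"
  have W: "\<bar>x s $ k - a $ k\<bar> \<le> W" for s k
  proof -
    have "\<bar>x s $ k - a $ k\<bar> \<le> (\<Sum>k\<in>UNIV. \<bar>x s $ k - a $ k\<bar>)"
      by (rule member_le_sum) auto
    also have "\<dots> \<le> W"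
      unfolding W_def by (rule member_le_sum) (auto intro: sum_nonneg)
    finally show ?thesis .
  qed
  define n m q where "n = CARD('d)" and "m = n - card K" and "q = n - card S"
  have "card S \<le> n"
    unfolding n_def by (rule card_mono) auto
  then have "q < m" and "1 + card S + q = 1 + n"
    using assms(1) by (simp_all add: m_def q_def)
  then have exponents: "q + m * n < m * (1 + card S + q)"
    by simp
  have "0 \<le> W"
    using W by (meson abs_ge_zero order_trans)
  then have factor_pos: "0 < (2 * 2 ^ n) ^ n * (2 / (1 + 2 * W)) ^ q"
    by simp
  have powers: "((2 * 2 ^ n) ^ n * (2 / (1 + 2 * W)) ^ q) * \<delta> ^ (q + m * n)
      \<le> (c ^ n * 2 ^ n * ((1 + 2 * W) ^ n * 2 ^ n) ^ card S * (6 * 2 ^ n * 2 ^ n) ^ q) * \<delta> ^ (m * (1 + card S + q))"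
    if "0 < \<delta>" "\<delta> \<le> 1" for \<delta>
  proof -
    interpret deficiency_test a x K S W \<delta>
      using agree W that by unfold_locales
    have "(\<Prod>k\<in>UNIV. 2 * side k) = 2 ^ n * \<delta> ^ m" and "\<eta> = \<delta> / (1 + 2 * W)"
      by (simp_all add: prod_side n_def m_def \<eta>_def \<Lambda>_def)
    with test_inequality[OF bound \<open>0 \<le> c\<close>] show ?thesis
      by (simp add: power_mult_distrib power_add power_mult power_divide mult_ac n_def q_def \<Lambda>_def)
  qed
  from factor_pos exponents powers show False
    by (rule no_power_bound_by_higher_power)
qed

section \<open>Hall's marriage theorem and the pointwise bijection\<close>

lemma Hall_matching_combine:
  assumes "J \<subseteq> I" and "inj_on \<sigma>\<^sub>1 J" and "\<forall>i\<in>J. \<sigma>\<^sub>1 i \<in> N i \<inter> U"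
    and "inj_on \<sigma>\<^sub>2 (I - J)" and "\<forall>i\<in>I - J. \<sigma>\<^sub>2 i \<in> N i - U"
  shows "\<exists>\<sigma>. inj_on \<sigma> I \<and> (\<forall>i\<in>I. \<sigma> i \<in> N i)"
proof (intro exI conjI)
  let ?\<sigma> = "\<lambda>i. if i \<in> J then \<sigma>\<^sub>1 i else \<sigma>\<^sub>2 i"
  have "inj_on ?\<sigma> (J \<union> (I - J))"
    using assms unfolding inj_on_Un by (auto simp: inj_on_def)
  then show "inj_on ?\<sigma> I"
    using \<open>J \<subseteq> I\<close> by (simp add: Un_absorb1)
  show "\<forall>i\<in>I. ?\<sigma> i \<in> N i"
    using assms by auto
qed

lemma Hall_condition_outside_critical:
  assumes Hall: "\<And>J. J \<subseteq> I \<Longrightarrow> card J \<le> card (\<Union>(N ` J))" and "finite I"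
    and "J \<subseteq> I" and critical: "card (\<Union>(N ` J)) \<le> card J" and "T \<subseteq> I - J"
  shows "card T \<le> card (\<Union>i\<in>T. N i - \<Union>(N ` J))"
proof -
  have "card T + card J = card (T \<union> J)"
    using assms(2-5) by (subst card_Un_disjoint) (auto intro: finite_subset)
  also have "\<dots> \<le> card (\<Union>(N ` (T \<union> J)))"
    using assms(3,5) by (intro Hall) auto
  also have "\<Union>(N ` (T \<union> J)) = (\<Union>i\<in>T. N i - \<Union>(N ` J)) \<union> \<Union>(N ` J)"
    by auto
  also have "card \<dots> \<le> card (\<Union>i\<in>T. N i - \<Union>(N ` J)) + card (\<Union>(N ` J))"
    by (rule card_Un_le)
  finally show ?thesis
    using critical by simp
qed

lemma Hall_condition_remove_edge:
  assumes surplus: "\<And>J. J \<subseteq> I \<Longrightarrow> J \<noteq> {} \<Longrightarrow> J \<noteq> I \<Longrightarrow> card J < card (\<Union>(N ` J))"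
    and "i0 \<in> I" and "T \<subseteq> I - {i0}"
  shows "card T \<le> card (\<Union>i\<in>T. N i - {j0})"
proof (cases "T = {}")
  case False
  with assms have "card T < card (\<Union>(N ` T))"
    by (intro surplus) auto
  moreover have "(\<Union>i\<in>T. N i - {j0}) = \<Union>(N ` T) - {j0}"
    by auto
  ultimately show ?thesis
    by (auto simp: card_Diff_singleton_if)
qed simp

theorem Hall_marriage:
  fixes N :: "'a \<Rightarrow> 'b set"
  assumes "finite I" and "\<And>i. i \<in> I \<Longrightarrow> finite (N i)"
    and "\<And>J. J \<subseteq> I \<Longrightarrow> card J \<le> card (\<Union>(N ` J))"
  shows "\<exists>\<sigma>. inj_on \<sigma> I \<and> (\<forall>i\<in>I. \<sigma> i \<in> N i)"
  using assms
proof (induction "card I" arbitrary: I N rule: less_induct)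
  case less
  note fin = less.prems(1) and fin_N = less.prems(2) and Hall = less.prems(3)
  show ?case
  proof (cases "\<exists>J. J \<subseteq> I \<and> J \<noteq> {} \<and> J \<noteq> I \<and> card (\<Union>(N ` J)) \<le> card J")
    case True
    \<comment> \<open>a critical subfamily \<open>J\<close> uses up \<open>\<Union>(N ` J)\<close>; the rest is matched outside of it\<close>
    then obtain J where J: "J \<subseteq> I" "J \<noteq> {}" "J \<noteq> I" and critical: "card (\<Union>(N ` J)) \<le> card J"
      by blast
    have "card J < card I" "card (I - J) < card I"
      using J fin by (auto intro!: psubset_card_mono card_Diff_subset)
    have "\<exists>\<sigma>. inj_on \<sigma> J \<and> (\<forall>i\<in>J. \<sigma> i \<in> N i)"
    proof (rule less.hyps[OF \<open>card J < card I\<close>])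
      show "finite J"
        using J(1) fin by (rule finite_subset)
      show "finite (N i)" if "i \<in> J" for i
        using that J(1) fin_N by blast
      show "card T \<le> card (\<Union>(N ` T))" if "T \<subseteq> J" for T
        using that J(1) by (intro Hall) blast
    qed
    moreover have "\<exists>\<sigma>. inj_on \<sigma> (I - J) \<and> (\<forall>i\<in>I - J. \<sigma> i \<in> N i - \<Union>(N ` J))"
      using fin fin_N Hall_condition_outside_critical[OF Hall fin J(1) critical]
      by (intro less.hyps[OF \<open>card (I - J) < card I\<close>]) auto
    ultimately show ?thesis
      using J(1) by (elim exE conjE, intro Hall_matching_combine[where U = "\<Union>(N ` J)"]) auto
  next
    case False
    \<comment> \<open>every proper subfamily has a surplus, so any single edge \<open>i0 \<mapsto> j0\<close> can be fixed\<close>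
    show ?thesis
    proof (cases "I = {}")
      case False
      then obtain i0 where "i0 \<in> I"
        by blast
      then have "N i0 \<noteq> {}"
        using Hall[of "{i0}"] by auto
      then obtain j0 where "j0 \<in> N i0"
        by blast
      have "card (I - {i0}) < card I"
        using fin \<open>i0 \<in> I\<close> by (rule card_Diff1_less)
      moreover have "card T \<le> card (\<Union>i\<in>T. N i - {j0})" if "T \<subseteq> I - {i0}" for T
        using \<open>\<not> (\<exists>J. _)\<close> \<open>i0 \<in> I\<close> that by (intro Hall_condition_remove_edge) (auto simp: not_le)
      ultimately have "\<exists>\<sigma>. inj_on \<sigma> (I - {i0}) \<and> (\<forall>i\<in>I - {i0}. \<sigma> i \<in> N i - {j0})"
        using fin fin_N by (intro less.hyps) auto
      then show ?thesis
        using \<open>i0 \<in> I\<close> \<open>j0 \<in> N i0\<close>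
        by (elim exE conjE, intro Hall_matching_combine[where J = "{i0}" and U = "{j0}" and \<sigma>\<^sub>1 = "\<lambda>_. j0"]) auto
    qed simp
  qed
qed

lemma BL_finite_imp_coordinates_differ:
  fixes x1 :: "real^'d" and x :: "'d \<Rightarrow> real^'d"
  assumes finite: "BL (Lmap x1) (\<lambda>_. 1 / real CARD('d)) (Mmap x) (\<lambda>_. 1 / real CARD('d)) < \<infinity>"
  obtains \<sigma> where "bij \<sigma>" and "\<And>s. x1 $ \<sigma> s \<noteq> x s $ \<sigma> s"
proof -
  define N where "N s = {k. x s $ k \<noteq> x1 $ k}" for s
  have "card J \<le> card (\<Union>(N ` J))" for J
  proof (rule ccontr)
    assume "\<not> card J \<le> card (\<Union>(N ` J))"
    then have "BL (Lmap x1) (\<lambda>_. 1 / real CARD('d)) (Mmap x) (\<lambda>_. 1 / real CARD('d)) = \<infinity>"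
      by (intro BL_infinite_if_deficient[where S = J and K = "\<Union>(N ` J)"]) (auto simp: N_def)
    with finite show False
      by simp
  qed
  then obtain \<sigma> where "inj \<sigma>" and "\<And>s. \<sigma> s \<in> N s"
    using Hall_marriage[of UNIV N] by auto
  moreover have "bij \<sigma>"
    using \<open>inj \<sigma>\<close> by (simp add: bij_def finite_UNIV_inj_surj)
  ultimately show ?thesis
    using that by (metis (mono_tags, lifting) N_def mem_Collect_eq)
qed

section \<open>Partitions into weakly transversal cells\<close>

lemma weakly_transversal_coordinates_differ:
  assumes "weakly_transversal Q0 Q" and "x1 \<in> Q0" and "\<And>s. x s \<in> Q s"
  obtains \<sigma> where "bij \<sigma>" and "\<And>s. x1 $ \<sigma> s \<noteq> x s $ \<sigma> s"
proof -
  from assms(1) obtain \<sigma> where "bij \<sigma>"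
    and disj: "\<And>s. closure ((\<lambda>y. y $ \<sigma> s) ` Q0) \<inter> closure ((\<lambda>y. y $ \<sigma> s) ` Q s) = {}"
    unfolding weakly_transversal_def by blast
  have "x1 $ \<sigma> s \<in> closure ((\<lambda>y. y $ \<sigma> s) ` Q0)" "x s $ \<sigma> s \<in> closure ((\<lambda>y. y $ \<sigma> s) ` Q s)" for s
    using assms(2,3) by (auto intro: closure_subset[THEN subsetD])
  then have "x1 $ \<sigma> s \<noteq> x s $ \<sigma> s" for s
    using disj[of s] by fastforce
  with \<open>bij \<sigma>\<close> show ?thesis
    using that by blast
qed

lemma weakly_transversalI_compact:
  assumes "compact Q0" and "\<And>s. compact (Q s)" and "bij \<sigma>"
    and differ: "\<And>s y0 y. y0 \<in> Q0 \<Longrightarrow> y \<in> Q s \<Longrightarrow> y0 $ \<sigma> s \<noteq> y $ \<sigma> s"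
  shows "weakly_transversal Q0 Q"
  unfolding weakly_transversal_def
proof (intro exI conjI allI)
  have closure_image: "closure ((\<lambda>y. y $ i) ` R) = (\<lambda>y. y $ i) ` R" if "compact R" for R :: "(real^'d) set" and i
    using that by (intro closure_closed compact_imp_closed compact_continuous_image continuous_intros)
  show "closure ((\<lambda>y. y $ \<sigma> s) ` Q0) \<inter> closure ((\<lambda>y. y $ \<sigma> s) ` Q s) = {}" for s
    unfolding closure_image[OF \<open>compact Q0\<close>] closure_image[OF assms(2)] using differ by blast
qed fact

lemma cube_partition_if_division:
  fixes D :: "(real^'d) set set"
  assumes "D division_of Q"
  shows "cube_partition Q D"
proof -
  have "is_cube R" if R: "R \<in> D" for R
  proof -
    obtain l u where "R = cbox l u" and "R \<noteq> {}"
      using division_ofD(3,4)[OF assms R] by blast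
    then have "\<forall>i. l $ i \<le> u $ i"
      by (simp add: interval_ne_empty_cart)
    with \<open>R = cbox l u\<close> show ?thesis
      unfolding is_cube_def by blast
  qed
  with assms show ?thesis
    by (auto simp: cube_partition_def division_of_def)
qed

lemma fine_cube_partition_exists:
  fixes Q :: "(real^'d) set"
  assumes "is_cube Q" and "0 < e"
  obtains P where "cube_partition Q P" and "\<And>R. R \<in> P \<Longrightarrow> \<exists>c\<in>R. R \<subseteq> ball c e"
proof -
  obtain a b where Q: "Q = cbox a b"
    using assms(1) by (auto simp: is_cube_def)
  obtain p where p: "p tagged_division_of Q" and fine: "(\<lambda>c. ball c e) fine p"
    using fine_division_exists[OF gauge_ball[OF \<open>0 < e\<close>], of a b] Q by blast
  have "\<exists>c\<in>R. R \<subseteq> ball c e" if "R \<in> snd ` p" for R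
  proof -
    from that obtain c where "(c, R) \<in> p"
      by force
    with p fine have "c \<in> R" and "R \<subseteq> ball c e"
      by (auto simp: fine_def dest: tagged_division_ofD(2))
    then show ?thesis
      by blast
  qed
  then show ?thesis
    using that[OF cube_partition_if_division[OF division_of_tagged_division[OF p]]] by blast
qed

lemma compact_if_is_cube: "is_cube Q \<Longrightarrow> compact Q"
  by (auto simp: is_cube_def)

lemma mem_cbox_vec_vec:
  fixes y A B :: "('a::euclidean_space)^'n"
  shows "y \<in> cbox A B \<longleftrightarrow> (\<forall>l. y $ l \<in> cbox (A $ l) (B $ l))"
  by (auto simp: mem_box Basis_vec_def inner_axis)

lemma compact_cube_configurations:
  fixes Q0 :: "(real^'d) set" and Q :: "'n::finite \<Rightarrow> (real^'d) set"
  assumes "is_cube Q0" and "\<And>l. is_cube (Q l)"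
  shows "compact (Q0 \<times> {y. \<forall>l. y $ l \<in> Q l})"
proof -
  obtain a b where "\<And>l. Q l = cbox (a l) (b l)"
    using assms(2) unfolding is_cube_def by metis
  then have "{y. \<forall>l. y $ l \<in> Q l} = cbox (\<chi> l. a l) (\<chi> l. b l)"
    by (auto simp: mem_cbox_vec_vec)
  then show ?thesis
    using assms(1) by (simp add: compact_Times compact_if_is_cube)
qed

lemma dist_Pair_vec_update_le:
  fixes c :: "'n::finite \<Rightarrow> 'a::metric_space"
  shows "dist (c0, \<chi> l. c l) (y0, \<chi> l. if l = s then y else c l) \<le> dist c0 y0 + dist (c s) y"
proof -
  have "dist (\<chi> l. c l) (\<chi> l. if l = s then y else c l) = L2_set (\<lambda>l. dist (c l) (if l = s then y else c l)) UNIV"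
    by (simp add: dist_vec_def)
  also have "\<dots> \<le> (\<Sum>l\<in>UNIV. dist (c l) (if l = s then y else c l))"
    by (rule L2_set_le_sum) simp
  also have "\<dots> = dist (c s) y"
    by (simp add: if_distrib[of "dist _"] cong: if_cong)
  finally have "dist (\<chi> l. c l) (\<chi> l. if l = s then y else c l) \<le> dist (c s) y" .
  moreover have "dist (c0, \<chi> l. c l) (y0, \<chi> l. if l = s then y else c l)
      \<le> dist c0 y0 + dist (\<chi> l. c l) (\<chi> l. if l = s then y else c l)"
    unfolding dist_Pair_Pair by (rule sqrt_sum_squares_le_sum) simp_all
  ultimately show ?thesis
    by simp
qed

lemma uniform_coordinates_differ:
  fixes Q0 :: "(real^'d) set" and Q :: "'d \<Rightarrow> (real^'d) set"
  assumes "is_cube Q0" and "\<And>l. is_cube (Q l)"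
    and finite: "\<And>x1 x. x1 \<in> Q0 \<Longrightarrow> (\<And>l. x l \<in> Q l) \<Longrightarrow>
      BL (Lmap x1) (\<lambda>_. 1 / real CARD('d)) (Mmap x) (\<lambda>_. 1 / real CARD('d)) < \<infinity>"
  obtains e where "0 < e" and "\<And>c0 c. c0 \<in> Q0 \<Longrightarrow> (\<And>l. c l \<in> Q l) \<Longrightarrow> \<exists>\<sigma>. bij \<sigma> \<and>
    (\<forall>s y0 y. dist c0 y0 < e \<longrightarrow> dist (c s) y < e \<longrightarrow> y0 $ \<sigma> s \<noteq> y $ \<sigma> s)"
proof -
  define X where "X = Q0 \<times> {y :: (real^'d)^'d. \<forall>l. y $ l \<in> Q l}"
  define U :: "('d \<Rightarrow> 'd) \<Rightarrow> ((real^'d) \<times> ((real^'d)^'d)) set"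
    where "U \<sigma> = (\<Inter>s. {p. fst p $ \<sigma> s \<noteq> snd p $ s $ \<sigma> s})" for \<sigma>
  have compact: "compact X"
    unfolding X_def using assms(1,2) by (rule compact_cube_configurations)
  have cover: "X \<subseteq> \<Union>(U ` {\<sigma>. bij \<sigma>})"
  proof
    fix p assume "p \<in> X"
    then have "BL (Lmap (fst p)) (\<lambda>_. 1 / real CARD('d)) (Mmap (\<lambda>l. snd p $ l)) (\<lambda>_. 1 / real CARD('d)) < \<infinity>"
      by (intro finite) (auto simp: X_def)
    then obtain \<sigma> where "bij \<sigma>" "\<And>s. fst p $ \<sigma> s \<noteq> snd p $ s $ \<sigma> s"
      by (rule BL_finite_imp_coordinates_differ) blast
    then show "p \<in> \<Union>(U ` {\<sigma>. bij \<sigma>})"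
      by (auto simp: U_def)
  qed
  have open_cover: "open G" if "G \<in> U ` {\<sigma>. bij \<sigma>}" for G
    using that by (auto simp: U_def intro!: open_INT open_Collect_neq continuous_intros)
  obtain e where "0 < e" and e: "\<And>p. p \<in> X \<Longrightarrow> \<exists>G\<in>U ` {\<sigma>. bij \<sigma>}. ball p e \<subseteq> G"
    using Heine_Borel_lemma[OF compact cover open_cover] by blast
  show ?thesis
  proof (rule that)
    show "0 < e / 2"
      using \<open>0 < e\<close> by simp
    fix c0 c assume "c0 \<in> Q0" and "\<And>l. c l \<in> Q l"
    then obtain \<sigma> where "bij \<sigma>" and ball: "ball (c0, \<chi> l. c l) e \<subseteq> U \<sigma>"
      using e[of "(c0, \<chi> l. c l)"] by (auto simp: X_def)
    have "y0 $ \<sigma> s \<noteq> y $ \<sigma> s" if "dist c0 y0 < e / 2" and "dist (c s) y < e / 2" for s y0 y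
    proof -
      have "(y0, \<chi> l. if l = s then y else c l) \<in> U \<sigma>"
        using ball dist_Pair_vec_update_le[of c0 c y0 s y] that by (auto simp: subset_iff)
      then show ?thesis
        by (auto simp: U_def dest: spec[of _ s])
    qed
    with \<open>bij \<sigma>\<close> show "\<exists>\<sigma>. bij \<sigma> \<and> (\<forall>s y0 y. dist c0 y0 < e / 2 \<longrightarrow> dist (c s) y < e / 2 \<longrightarrow> y0 $ \<sigma> s \<noteq> y $ \<sigma> s)"
      by blast
  qed
qed

lemma weakly_transversal_partition_if_BL_finite:
  fixes Q0 :: "(real^'d) set" and Q :: "'d \<Rightarrow> (real^'d) set"
  assumes "is_cube Q0" and "\<And>l. is_cube (Q l)"
    and finite: "\<And>x1 x. x1 \<in> Q0 \<Longrightarrow> (\<And>l. x l \<in> Q l) \<Longrightarrow>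
      BL (Lmap x1) (\<lambda>_. 1 / real CARD('d)) (Mmap x) (\<lambda>_. 1 / real CARD('d)) < \<infinity>"
  obtains P0 P where "cube_partition Q0 P0" and "\<And>l. cube_partition (Q l) (P l)"
    and "\<And>R0 R. R0 \<in> P0 \<Longrightarrow> (\<And>l. R l \<in> P l) \<Longrightarrow> weakly_transversal R0 R"
proof -
  obtain e where "0 < e" and uniform: "\<And>c0 c. c0 \<in> Q0 \<Longrightarrow> (\<And>l. c l \<in> Q l) \<Longrightarrow> \<exists>\<sigma>. bij \<sigma> \<and>
      (\<forall>s y0 y. dist c0 y0 < e \<longrightarrow> dist (c s) y < e \<longrightarrow> y0 $ \<sigma> s \<noteq> y $ \<sigma> s)"
    using uniform_coordinates_differ[of Q0 Q, OF assms] by blast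
  obtain P0 where P0: "cube_partition Q0 P0" and fine0: "\<And>R. R \<in> P0 \<Longrightarrow> \<exists>c\<in>R. R \<subseteq> ball c e"
    using fine_cube_partition_exists[OF assms(1) \<open>0 < e\<close>] by blast
  have "\<forall>l. \<exists>P. cube_partition (Q l) P \<and> (\<forall>R\<in>P. \<exists>c\<in>R. R \<subseteq> ball c e)"
    using fine_cube_partition_exists[OF assms(2) \<open>0 < e\<close>] by metis
  then obtain P where P: "\<And>l. cube_partition (Q l) (P l)" and fine: "\<And>l R. R \<in> P l \<Longrightarrow> \<exists>c\<in>R. R \<subseteq> ball c e"
    by metis
  have "weakly_transversal R0 R" if R0: "R0 \<in> P0" and R: "\<And>l. R l \<in> P l" for R0 R
  proof -
    have cube: "is_cube R0" "R0 \<subseteq> Q0" "is_cube (R l)" "R l \<subseteq> Q l" for l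
      using P0 P[of l] R0 R[of l] by (auto simp: cube_partition_def)
    obtain c0 where "c0 \<in> R0" and c0: "R0 \<subseteq> ball c0 e"
      using fine0[OF R0] by blast
    obtain c where "\<And>l. c l \<in> R l" and c: "\<And>l. R l \<subseteq> ball (c l) e"
      using fine[OF R] by metis
    then obtain \<sigma> where "bij \<sigma>" and \<sigma>: "\<And>s y0 y. dist c0 y0 < e \<Longrightarrow> dist (c s) y < e \<Longrightarrow> y0 $ \<sigma> s \<noteq> y $ \<sigma> s"
      using uniform[of c0 c] \<open>c0 \<in> R0\<close> cube by blast
    show ?thesis
    proof (rule weakly_transversalI_compact[OF _ _ \<open>bij \<sigma>\<close>])
      show "compact R0" "compact (R l)" for l
        using cube by (simp_all add: compact_if_is_cube)
      show "y0 $ \<sigma> s \<noteq> y $ \<sigma> s" if "y0 \<in> R0" and "y \<in> R s" for s y0 y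
        using \<sigma> c0 c[of s] that by (meson mem_ball subsetD)
    qed
  qed
  with P0 P show ?thesis
    using that by blast
qed

theorem theorem13p3:
  fixes Q0 :: "(real^'d) set" and Q :: "'d \<Rightarrow> (real^'d) set"
  assumes "is_cube Q0" and "\<forall>l. is_cube (Q l)"
  shows "(weakly_transversal Q0 Q \<longrightarrow>
            (\<forall>x1\<in>Q0. \<forall>x. (\<forall>l. x l \<in> Q l) \<longrightarrow>
               BL (Lmap x1) (\<lambda>_. 1 / real CARD('d)) (Mmap x) (\<lambda>_. 1 / real CARD('d)) < \<infinity>))
       \<and> ((\<forall>x1\<in>Q0. \<forall>x. (\<forall>l. x l \<in> Q l) \<longrightarrow>
               BL (Lmap x1) (\<lambda>_. 1 / real CARD('d)) (Mmap x) (\<lambda>_. 1 / real CARD('d)) < \<infinity>)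
          \<longrightarrow> (\<exists>P0 P. cube_partition Q0 P0 \<and> (\<forall>l. cube_partition (Q l) (P l)) \<and>
                 (\<forall>R0\<in>P0. \<forall>R. (\<forall>l. R l \<in> P l) \<longrightarrow> weakly_transversal R0 R)))"
proof (intro conjI impI ballI allI)
  fix x1 x
  assume "weakly_transversal Q0 Q" and "x1 \<in> Q0" and "\<forall>l. x l \<in> Q l"
  then obtain \<sigma> where "bij \<sigma>" and "\<And>s. x1 $ \<sigma> s \<noteq> x s $ \<sigma> s"
    by (metis weakly_transversal_coordinates_differ)
  then show "BL (Lmap x1) (\<lambda>_. 1 / real CARD('d)) (Mmap x) (\<lambda>_. 1 / real CARD('d)) < \<infinity>"
    by (rule BL_finite_if_coordinates_differ)
next
  assume "\<forall>x1\<in>Q0. \<forall>x. (\<forall>l. x l \<in> Q l) \<longrightarrow>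
    BL (Lmap x1) (\<lambda>_. 1 / real CARD('d)) (Mmap x) (\<lambda>_. 1 / real CARD('d)) < \<infinity>"
  then obtain P0 P where "cube_partition Q0 P0" and "\<And>l. cube_partition (Q l) (P l)"
    and "\<And>R0 R. R0 \<in> P0 \<Longrightarrow> (\<And>l. R l \<in> P l) \<Longrightarrow> weakly_transversal R0 R"
    using weakly_transversal_partition_if_BL_finite[of Q0 Q] assms by metis
  then show "\<exists>P0 P. cube_partition Q0 P0 \<and> (\<forall>l. cube_partition (Q l) (P l)) \<and>
      (\<forall>R0\<in>P0. \<forall>R. (\<forall>l. R l \<in> P l) \<longrightarrow> weakly_transversal R0 R)"
    by blast
qed

end
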